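(* Let $n\geq 3$, $a>1$, $p,q\in\mathbb{R}$, and let $f_t(x)$, $x\in[1,a]$, solve $$\dot f=u''(x)\left(\frac{f''}{1+f'^2}+(n-1)\frac{xf'-f}{x^2+f^2}\right),\qquad f_t(1)=q,\ f_t(a)=p,$$ where $f_0$ satisfies the supercritical phase assumption $(n-1)\arctan\left(\frac{f_0}{x}\right)+\arctan(f_0')>(n-2)\frac{\pi}{2}$. Then there exists a uniform constant $C$ such that $f_t'(x)>-C$ for all $x\in[1,a]$ and all $t\geq 0$ for which the flow is defined.
   Context: This is the line bundle mean curvature flow on the blowup of $\mathbb{P}^n$ at a point under Calabi symmetry, written in the Legendre coordinate $x\in[1,a]$: $u''$ is the smooth function of $x$ coming from the Calabi-symmetric K\"ahler form $\omega=i\partial\bar\partial u$ in $a[H]-[E]$ (positive on $(1,a)$, vanishing at the endpoints), and $f$ encodes a Calabi-symmetric form $\alpha_t$ in $p[H]-q[E]$ whose eigenvalues relative to $\omega$ are $f/x$ (multiplicity $n-1$) and $f'$, so its angle is $\Theta=(n-1)\arctan(f/x)+\arctan(f')$. *)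

theory Defs
  imports "HOL-Analysis.Analysis" "HOL-Library.Extended_Real"
begin

definition time_dom :: "ereal \<Rightarrow> real set" where
  "time_dom T = {t. 0 \<le> t \<and> ereal t < T}"

definition smooth_on_interval :: "(real \<Rightarrow> real) \<Rightarrow> real set \<Rightarrow> bool" where
  "smooth_on_interval g I \<longleftrightarrow>
     (\<exists>D :: nat \<Rightarrow> real \<Rightarrow> real. D 0 = g \<and>
        (\<forall>k. \<forall>x\<in>I. (D k has_real_derivative D (Suc k) x) (at x within I)))"

definition smooth_on_strip :: "(real \<Rightarrow> real \<Rightarrow> real) \<Rightarrow> real set \<Rightarrow> real set \<Rightarrow> bool" where
  "smooth_on_strip g J I \<longleftrightarrow>
     (\<exists>D :: nat \<Rightarrow> nat \<Rightarrow> real \<Rightarrow> real \<Rightarrow> real. D 0 0 = g \<and>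
        (\<forall>i j. continuous_on (J \<times> I) (\<lambda>(t,x). D i j t x)) \<and>
        (\<forall>i j. \<forall>t\<in>J. \<forall>x\<in>I.
            ((\<lambda>s. D i j s x) has_real_derivative D (Suc i) j t x) (at t within J) \<and>
            ((\<lambda>y. D i j t y) has_real_derivative D i (Suc j) t x) (at x within I)))"

end

theory Submission
  imports Defs
begin

(* Write Theta = (n - 1) arctan (f / x) + arctan f', so that the flow reads f_t = u'' Theta_x.
   At a spatial minimum x0 of Theta (t, _) either u'' (x0) = 0 or Theta_x (t, x0) = 0, so f_t
   vanishes there; since f_t has the sign of Theta_x on (1, a), minimality also forces
   (f_t)_x (t, x0) >= 0.  Hence Theta_t = (f')_t / (1 + f'^2) >= 0 at spatial minima, and a
   first-time argument applied to Theta + e (1 + t) shows that min Theta (t, _) never drops below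
   min Theta (0, _) > (n - 2) pi / 2.  As (n - 1) arctan (f / x) < (n - 1) pi / 2, this keeps
   arctan f' above min Theta (0, _) - (n - 1) pi / 2 > - pi / 2.  Neither the boundary values of f
   nor the smoothness of u'' are needed: u'' = 0 at the endpoints already gives f_t = 0 there. *)

lemma has_real_derivative_unique_Icc:
  fixes g :: "real \<Rightarrow> real"
  assumes "(g has_real_derivative d1) (at x within S)" "(g has_real_derivative d2) (at x within S)"
    and "{l..u} \<subseteq> S" "l < u" "x \<in> {l..u}"
  shows "d1 = d2"
proof (rule has_field_derivative_unique[OF assms(1,2)])
  have "x islimpt S"
    using assms(3-5) islimpt_Icc islimpt_subset by blast
  then show "at x within S \<noteq> bot"
    by (simp add: trivial_limit_within)
qed

lemma has_real_derivative_le_if_above_left: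
  fixes g :: "real \<Rightarrow> real"
  assumes deriv: "(g has_real_derivative d) (at t within {l..t})" and "l < t"
    and above: "\<And>s. l < s \<Longrightarrow> s < t \<Longrightarrow> g t + k * (t - s) \<le> g s"
  shows "d \<le> - k"
proof -
  have "((\<lambda>s. (g s - g t) / (s - t)) \<longlongrightarrow> d) (at_left t)"
    using deriv \<open>l < t\<close> by (simp add: has_field_derivative_iff at_within_Icc_at_left)
  moreover have "eventually (\<lambda>s. (g s - g t) / (s - t) \<le> - k) (at_left t)"
    using eventually_at_left_real[OF \<open>l < t\<close>]
  proof eventually_elim
    case (elim s)
    then have "k * (t - s) \<le> g s - g t"
      using above by force
    then show ?case
      using elim by (subst neg_divide_le_eq) (auto simp: algebra_simps)
  qed
  ultimately show ?thesis
    by (rule tendsto_upperbound) simp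
qed

lemma continuous_at_left_lower_bound:
  fixes g :: "real \<Rightarrow> real"
  assumes "continuous (at t within {l..t}) g" "l < t"
    and "\<And>s. l < s \<Longrightarrow> s < t \<Longrightarrow> m \<le> g s"
  shows "m \<le> g t"
proof -
  have "(g \<longlongrightarrow> g t) (at_left t)"
    using assms(1) unfolding continuous_within at_within_Icc_at_left[OF assms(2)] .
  moreover have "eventually (\<lambda>s. m \<le> g s) (at_left t)"
    using eventually_at_left_real[OF assms(2)] by eventually_elim (simp add: assms(3))
  ultimately show ?thesis
    by (rule tendsto_lowerbound) simp
qed

lemma has_real_derivative_arctan_div:
  fixes g :: "real \<Rightarrow> real"
  assumes "(g has_real_derivative g') (at x within S)" "x \<noteq> 0"
  shows "((\<lambda>y. arctan (g y / y)) has_real_derivative (x * g' - g x) / (x\<^sup>2 + (g x)\<^sup>2))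
           (at x within S)"
proof -
  have "((\<lambda>y. arctan (g y / y)) has_real_derivative
          inverse (1 + (g x / x)\<^sup>2) * ((g' * x - g x * 1) / (x * x))) (at x within S)"
    using assms by (intro DERIV_arctan[THEN DERIV_chain2] DERIV_divide DERIV_ident) auto
  moreover have "inverse (1 + (g x / x)\<^sup>2) * ((g' * x - g x * 1) / (x * x))
      = (x * g' - g x) / (x\<^sup>2 + (g x)\<^sup>2)"
    using assms(2) by (simp add: divide_simps power2_eq_square add_nonneg_eq_0_iff)
  ultimately show ?thesis
    by simp
qed

lemma tan_less_if_arctan_sum_ge:
  fixes c m F P :: real
  assumes "0 < c" "(c - 1) * (pi / 2) < m" "m \<le> c * arctan F + arctan P"
  shows "tan (m - c * (pi / 2)) < P"
proof -
  have "c * arctan F < c * (pi / 2)"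
    using assms(1) arctan_ubound by simp
  with assms(3) have less: "m - c * (pi / 2) < arctan P"
    by simp
  have "m - c * (pi / 2) < pi / 2"
    using less arctan_ubound by (rule order.strict_trans)
  moreover have "- (pi / 2) < m - c * (pi / 2)"
    using assms(2) by (simp add: algebra_simps)
  ultimately have "arctan (tan (m - c * (pi / 2))) < arctan P"
    using less by (simp add: arctan_tan)
  then show ?thesis
    by (simp only: arctan_less_iff)
qed

lemma zero_in_time_dom: "0 < T \<Longrightarrow> 0 \<in> time_dom T"
  by (simp add: time_dom_def zero_ereal_def)

lemma atLeastAtMost_subset_time_dom:
  assumes "t \<in> time_dom T" shows "{0..t} \<subseteq> time_dom T"
proof
  fix s assume "s \<in> {0..t}"
  with assms show "s \<in> time_dom T"
    unfolding time_dom_def by (auto intro: le_less_trans[of "ereal s" "ereal t"])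
qed

lemma first_time_in_sublevel_set:
  fixes g :: "real \<times> 'a::t2_space \<Rightarrow> real" and I :: "'a set"
  assumes "compact I" and g: "continuous_on ({0..t} \<times> I) g"
    and "s0 \<in> {0..t}" "y0 \<in> I" "g (s0, y0) \<le> m"
  obtains ts xs where "ts \<in> {0..t}" "xs \<in> I" "g (ts, xs) \<le> m"
    and "\<And>s y. 0 \<le> s \<Longrightarrow> s < ts \<Longrightarrow> y \<in> I \<Longrightarrow> m < g (s, y)"
proof -
  define K where "K = ({0..t} \<times> I) \<inter> g -` {..m}"
  have S: "compact ({0..t} \<times> I)"
    using \<open>compact I\<close> by (intro compact_Times compact_Icc)
  have "closed K"
    unfolding K_def using g compact_imp_closed[OF S] closed_atMost by (rule continuous_closed_preimage)
  then have "compact ({0..t} \<times> I \<inter> K)"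
    by (rule compact_Int_closed[OF S])
  moreover have "{0..t} \<times> I \<inter> K = K"
    by (auto simp: K_def)
  ultimately have "compact K"
    by simp
  moreover have "(s0, y0) \<in> K"
    using assms(3-5) by (simp add: K_def)
  ultimately obtain z where z: "z \<in> K" and first: "\<forall>w\<in>K. fst z \<le> fst w"
    using continuous_attains_inf[OF _ _ continuous_on_fst[OF continuous_on_id]] by (metis empty_iff)
  show ?thesis
  proof (rule that)
    show "fst z \<in> {0..t}" "snd z \<in> I" "g (fst z, snd z) \<le> m"
      using z by (auto simp: K_def)
    show "m < g (s, y)" if "0 \<le> s" "s < fst z" "y \<in> I" for s y
      using bspec[OF first, of "(s, y)"] that z by (auto simp: K_def simp flip: not_le)
  qed
qed

lemma min_principle_perturbed:
  fixes \<Theta> \<Theta>' :: "real \<Rightarrow> 'a::t2_space \<Rightarrow> real" and I :: "'a set"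
  assumes I: "compact I"
    and cont: "continuous_on (time_dom T \<times> I) (\<lambda>(t, x). \<Theta> t x)"
    and deriv: "\<And>t x. t \<in> time_dom T \<Longrightarrow> 0 < t \<Longrightarrow> x \<in> I \<Longrightarrow>
                  ((\<lambda>s. \<Theta> s x) has_real_derivative \<Theta>' t x) (at t within time_dom T)"
    and at_min: "\<And>t x. t \<in> time_dom T \<Longrightarrow> 0 < t \<Longrightarrow> x \<in> I \<Longrightarrow>
                  \<forall>y\<in>I. \<Theta> t x \<le> \<Theta> t y \<Longrightarrow> 0 \<le> \<Theta>' t x"
    and init: "\<forall>x\<in>I. m \<le> \<Theta> 0 x"
    and e: "0 < e" and t: "t \<in> time_dom T" and x: "x \<in> I"
  shows "m < \<Theta> t x + e * (1 + t)"
proof (rule ccontr)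
  define g where "g = (\<lambda>z. \<Theta> (fst z) (snd z) + e * (1 + fst z))"
  assume "\<not> m < \<Theta> t x + e * (1 + t)"
  then have "g (t, x) \<le> m"
    by (simp add: g_def)
  have "continuous_on ({0..t} \<times> I) (\<lambda>(s, y). \<Theta> s y)"
    by (rule continuous_on_subset[OF cont]) (use atLeastAtMost_subset_time_dom[OF t] in auto)
  then have g_cont: "continuous_on ({0..t} \<times> I) g"
    unfolding g_def case_prod_beta' by (intro continuous_intros)
  have "t \<in> {0..t}"
    using t by (simp add: time_dom_def)
  then obtain ts xs where ts: "ts \<in> {0..t}" and xs: "xs \<in> I" and "g (ts, xs) \<le> m"
    and before_g: "\<And>s y. 0 \<le> s \<Longrightarrow> s < ts \<Longrightarrow> y \<in> I \<Longrightarrow> m < g (s, y)"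
    using first_time_in_sublevel_set[OF I g_cont _ x \<open>g (t, x) \<le> m\<close>] by metis
  then have reached: "\<Theta> ts xs + e * (1 + ts) \<le> m"
    by (simp add: g_def)
  have before: "m \<le> \<Theta> s y + e * (1 + s)" if "0 < s" "s < ts" "y \<in> I" for s y
    using before_g[of s y] that by (simp add: g_def)
  have tsJ: "ts \<in> time_dom T"
    using atLeastAtMost_subset_time_dom[OF t] ts by blast
  have ts_pos: "0 < ts"
  proof (rule ccontr)
    assume "\<not> 0 < ts"
    with ts reached have "\<Theta> 0 xs + e \<le> m"
      by simp
    with init xs e show False
      by force
  qed
  have deriv_left: "((\<lambda>s. \<Theta> s y) has_real_derivative \<Theta>' ts y) (at ts within {0..ts})"
    if "y \<in> I" for y
    using deriv[OF tsJ ts_pos that] atLeastAtMost_subset_time_dom[OF tsJ] by (rule DERIV_subset)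
  have "\<forall>y\<in>I. \<Theta> ts xs \<le> \<Theta> ts y"
  proof
    fix y assume y: "y \<in> I"
    have "continuous (at ts within {0..ts}) (\<lambda>s. \<Theta> s y + e * (1 + s))"
      using DERIV_continuous[OF deriv_left[OF y]] by (intro continuous_intros)
    then have "m \<le> \<Theta> ts y + e * (1 + ts)"
      by (rule continuous_at_left_lower_bound[OF _ ts_pos]) (use before y in simp)
    with reached show "\<Theta> ts xs \<le> \<Theta> ts y"
      by simp
  qed
  then have "0 \<le> \<Theta>' ts xs"
    by (rule at_min[OF tsJ ts_pos xs])
  moreover have "\<Theta>' ts xs \<le> - e"
  proof (rule has_real_derivative_le_if_above_left[OF deriv_left[OF xs] ts_pos])
    fix s assume "0 < s" "s < ts"
    then show "\<Theta> ts xs + e * (ts - s) \<le> \<Theta> s xs"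
      using before[of s xs] reached xs by (simp add: algebra_simps)
  qed
  ultimately show False
    using e by simp
qed

lemma min_principle:
  fixes \<Theta> \<Theta>' :: "real \<Rightarrow> 'a::t2_space \<Rightarrow> real" and I :: "'a set"
  assumes "compact I"
    and "continuous_on (time_dom T \<times> I) (\<lambda>(t, x). \<Theta> t x)"
    and "\<And>t x. t \<in> time_dom T \<Longrightarrow> 0 < t \<Longrightarrow> x \<in> I \<Longrightarrow>
           ((\<lambda>s. \<Theta> s x) has_real_derivative \<Theta>' t x) (at t within time_dom T)"
    and "\<And>t x. t \<in> time_dom T \<Longrightarrow> 0 < t \<Longrightarrow> x \<in> I \<Longrightarrow>
           \<forall>y\<in>I. \<Theta> t x \<le> \<Theta> t y \<Longrightarrow> 0 \<le> \<Theta>' t x"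
    and "\<forall>x\<in>I. m \<le> \<Theta> 0 x"
    and t: "t \<in> time_dom T" and x: "x \<in> I"
  shows "m \<le> \<Theta> t x"
proof (rule field_le_epsilon)
  fix e :: real assume "0 < e"
  have "0 \<le> t"
    using t by (simp add: time_dom_def)
  with \<open>0 < e\<close> have "0 < e / (1 + t)"
    by simp
  with assms(1-5) have "m < \<Theta> t x + e / (1 + t) * (1 + t)"
    using t x by (rule min_principle_perturbed)
  moreover have "e / (1 + t) * (1 + t) = e"
    using \<open>0 \<le> t\<close> by simp
  ultimately show "m \<le> \<Theta> t x + e"
    by simp
qed

lemma weighted_slope_zero_at_min:
  fixes \<Theta> \<Theta>' U :: "real \<Rightarrow> real"
  assumes deriv: "\<And>y. y \<in> {l..u} \<Longrightarrow> (\<Theta> has_real_derivative \<Theta>' y) (at y within {l..u})"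
    and "U l = 0" "U u = 0"
    and x: "x \<in> {l..u}" and min: "\<forall>y\<in>{l..u}. \<Theta> x \<le> \<Theta> y"
  shows "U x * \<Theta>' x = 0"
proof (cases "x = l \<or> x = u")
  case True
  with assms(2,3) show ?thesis
    by auto
next
  case False
  with x have "l < x" "x < u"
    by auto
  then have "DERIV \<Theta> x :> \<Theta>' x"
    using deriv[OF x] by (simp add: at_within_Icc_at)
  moreover have "\<forall>y. \<bar>x - y\<bar> < min (x - l) (u - x) \<longrightarrow> \<Theta> x \<le> \<Theta> y"
    using min by (auto simp: abs_less_iff)
  ultimately have "\<Theta>' x = 0"
    using \<open>l < x\<close> \<open>x < u\<close> by (intro DERIV_local_min[where d = "min (x - l) (u - x)"]) auto
  then show ?thesis
    by simp
qed

lemma weighted_slope_not_min_right: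
  fixes \<Theta> \<Theta>' U h :: "real \<Rightarrow> real"
  assumes deriv: "\<And>y. y \<in> {l..u} \<Longrightarrow> (\<Theta> has_real_derivative \<Theta>' y) (at y within {l..u})"
    and U_pos: "\<And>y. y \<in> {l<..<u} \<Longrightarrow> 0 < U y"
    and h_eq: "\<And>y. y \<in> {l<..<u} \<Longrightarrow> h y = U y * \<Theta>' y"
    and h_deriv: "(h has_real_derivative d) (at x within {l..u})" and "d < 0" and "h x = 0"
    and x: "x \<in> {l..u}" and "x < u"
  shows "\<exists>y\<in>{l..u}. \<Theta> y < \<Theta> x"
proof -
  obtain \<delta> where "0 < \<delta>"
    and right: "\<And>k. 0 < k \<Longrightarrow> x + k \<in> {l..u} \<Longrightarrow> k < \<delta> \<Longrightarrow> h (x + k) < 0"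
    using has_real_derivative_neg_dec_right[OF h_deriv \<open>d < 0\<close>] \<open>h x = 0\<close> by auto
  define \<epsilon> where "\<epsilon> = min \<delta> (u - x)"
  have \<epsilon>: "0 < \<epsilon>" "\<epsilon> \<le> \<delta>" "x + \<epsilon> \<le> u"
    using \<open>0 < \<delta>\<close> \<open>x < u\<close> by (auto simp: \<epsilon>_def)
  define y where "y = x + \<epsilon> / 2"
  have y: "x < y" "y < x + \<epsilon>"
    using \<epsilon>(1) by (simp_all add: y_def)
  have "\<Theta> y < \<Theta> x"
  proof (rule DERIV_neg_imp_decreasing_open[OF y(1)])
    show "\<exists>d. DERIV \<Theta> z :> d \<and> d < 0" if "x < z" "z < y" for z
    proof -
      have z: "z \<in> {l<..<u}" "z \<in> {l..u}" "z - x < \<delta>"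
        using that x y \<epsilon> by auto
      then have "h z < 0"
        using right[of "z - x"] that by simp
      then have "\<Theta>' z < 0"
        using h_eq[OF z(1)] U_pos[OF z(1)] by (simp add: mult_less_0_iff)
      moreover have "DERIV \<Theta> z :> \<Theta>' z"
        using deriv[OF z(2)] z(1) by (simp add: at_within_Icc_at)
      ultimately show ?thesis
        by blast
    qed
    show "continuous_on {x..y} \<Theta>"
      by (rule continuous_on_subset[OF DERIV_continuous_on[OF deriv]]) (use x y \<epsilon> in auto)
  qed
  moreover have "y \<in> {l..u}"
    using x y \<epsilon> by auto
  ultimately show ?thesis
    by blast
qed

lemma weighted_slope_not_min_left:
  fixes \<Theta> \<Theta>' U h :: "real \<Rightarrow> real"
  assumes deriv: "\<And>y. y \<in> {l..u} \<Longrightarrow> (\<Theta> has_real_derivative \<Theta>' y) (at y within {l..u})"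
    and U_pos: "\<And>y. y \<in> {l<..<u} \<Longrightarrow> 0 < U y"
    and h_eq: "\<And>y. y \<in> {l<..<u} \<Longrightarrow> h y = U y * \<Theta>' y"
    and h_deriv: "(h has_real_derivative d) (at x within {l..u})" and "d < 0" and "h x = 0"
    and x: "x \<in> {l..u}" and "l < x"
  shows "\<exists>y\<in>{l..u}. \<Theta> y < \<Theta> x"
proof -
  obtain \<delta> where "0 < \<delta>"
    and left: "\<And>k. 0 < k \<Longrightarrow> x - k \<in> {l..u} \<Longrightarrow> k < \<delta> \<Longrightarrow> 0 < h (x - k)"
    using has_real_derivative_neg_dec_left[OF h_deriv \<open>d < 0\<close>] \<open>h x = 0\<close> by auto
  define \<epsilon> where "\<epsilon> = min \<delta> (x - l)"
  have \<epsilon>: "0 < \<epsilon>" "\<epsilon> \<le> \<delta>" "l \<le> x - \<epsilon>"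
    using \<open>0 < \<delta>\<close> \<open>l < x\<close> by (auto simp: \<epsilon>_def)
  define y where "y = x - \<epsilon> / 2"
  have y: "y < x" "x - \<epsilon> < y"
    using \<epsilon>(1) by (simp_all add: y_def)
  have "\<Theta> y < \<Theta> x"
  proof (rule DERIV_pos_imp_increasing_open[OF y(1)])
    show "\<exists>d. DERIV \<Theta> z :> d \<and> 0 < d" if "y < z" "z < x" for z
    proof -
      have z: "z \<in> {l<..<u}" "z \<in> {l..u}" "x - z < \<delta>"
        using that x y \<epsilon> by auto
      then have "0 < h z"
        using left[of "x - z"] that by simp
      then have "0 < \<Theta>' z"
        using h_eq[OF z(1)] U_pos[OF z(1)] by (simp add: zero_less_mult_iff)
      moreover have "DERIV \<Theta> z :> \<Theta>' z"
        using deriv[OF z(2)] z(1) by (simp add: at_within_Icc_at)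
      ultimately show ?thesis
        by blast
    qed
    show "continuous_on {y..x} \<Theta>"
      by (rule continuous_on_subset[OF DERIV_continuous_on[OF deriv]]) (use x y \<epsilon> in auto)
  qed
  moreover have "y \<in> {l..u}"
    using x y \<epsilon> by auto
  ultimately show ?thesis
    by blast
qed

lemma weighted_slope_deriv_nonneg_at_min:
  fixes \<Theta> \<Theta>' U h :: "real \<Rightarrow> real"
  assumes deriv: "\<And>y. y \<in> {l..u} \<Longrightarrow> (\<Theta> has_real_derivative \<Theta>' y) (at y within {l..u})"
    and U_pos: "\<And>y. y \<in> {l<..<u} \<Longrightarrow> 0 < U y"
    and h_eq: "\<And>y. y \<in> {l<..<u} \<Longrightarrow> h y = U y * \<Theta>' y"
    and h_deriv: "(h has_real_derivative d) (at x within {l..u})" and h_zero: "h x = 0"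
    and "l < u" and x: "x \<in> {l..u}" and min: "\<forall>y\<in>{l..u}. \<Theta> x \<le> \<Theta> y"
  shows "0 \<le> d"
proof (rule ccontr)
  assume "\<not> 0 \<le> d"
  then have d: "d < 0"
    by simp
  have "\<exists>y\<in>{l..u}. \<Theta> y < \<Theta> x"
  proof (cases "x < u")
    case True
    show ?thesis
      by (rule weighted_slope_not_min_right[OF deriv U_pos h_eq h_deriv d h_zero x True])
  next
    case False
    with x \<open>l < u\<close> have "l < x"
      by simp
    show ?thesis
      by (rule weighted_slope_not_min_left[OF deriv U_pos h_eq h_deriv d h_zero x \<open>l < x\<close>])
  qed
  with min show False
    by force
qed

locale calabi_symmetric_flow =
  fixes c a :: real and T :: ereal and U :: "real \<Rightarrow> real"
    and f ft fx fxx :: "real \<Rightarrow> real \<Rightarrow> real"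
    and D :: "nat \<Rightarrow> nat \<Rightarrow> real \<Rightarrow> real \<Rightarrow> real"
  assumes a_gt_1: "1 < a"
    and U_pos: "\<And>x. x \<in> {1<..<a} \<Longrightarrow> 0 < U x"
    and U_ends: "U 1 = 0" "U a = 0"
    and D_00: "D 0 0 = f"
    and D_cont: "\<And>i j. continuous_on (time_dom T \<times> {1..a}) (\<lambda>(t, x). D i j t x)"
    and D_t: "\<And>i j t x. t \<in> time_dom T \<Longrightarrow> x \<in> {1..a} \<Longrightarrow>
                ((\<lambda>s. D i j s x) has_real_derivative D (Suc i) j t x) (at t within time_dom T)"
    and D_x: "\<And>i j t x. t \<in> time_dom T \<Longrightarrow> x \<in> {1..a} \<Longrightarrow>
                (D i j t has_real_derivative D i (Suc j) t x) (at x within {1..a})"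
    and ft: "\<And>t x. t \<in> time_dom T \<Longrightarrow> x \<in> {1..a} \<Longrightarrow>
               ((\<lambda>s. f s x) has_real_derivative ft t x) (at t within time_dom T)"
    and fx: "\<And>t x. t \<in> time_dom T \<Longrightarrow> x \<in> {1..a} \<Longrightarrow>
               (f t has_real_derivative fx t x) (at x within {1..a})"
    and fxx: "\<And>t x. t \<in> time_dom T \<Longrightarrow> x \<in> {1..a} \<Longrightarrow>
                (fx t has_real_derivative fxx t x) (at x within {1..a})"
    and flow: "\<And>t x. t \<in> time_dom T \<Longrightarrow> x \<in> {1..a} \<Longrightarrow>
                 ft t x = U x * (fxx t x / (1 + (fx t x)\<^sup>2)
                                 + c * (x * fx t x - f t x) / (x\<^sup>2 + (f t x)\<^sup>2))"
begin

definition Theta :: "real \<Rightarrow> real \<Rightarrow> real" where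
  "Theta t x = c * arctan (f t x / x) + arctan (fx t x)"

definition Theta_x :: "real \<Rightarrow> real \<Rightarrow> real" where
  "Theta_x t x = fxx t x / (1 + (fx t x)\<^sup>2) + c * (x * fx t x - f t x) / (x\<^sup>2 + (f t x)\<^sup>2)"

text \<open>\<open>D 1 1\<close> is both the time derivative of \<open>fx\<close> and the space derivative of \<open>ft\<close>;
  this symmetry of the mixed partials is what makes \<open>Theta_t\<close> nonnegative at spatial minima.\<close>

definition Theta_t :: "real \<Rightarrow> real \<Rightarrow> real" where
  "Theta_t t x = c * (x * ft t x) / (x\<^sup>2 + (f t x)\<^sup>2) + D 1 1 t x / (1 + (fx t x)\<^sup>2)"

lemma fx_eq_D: "t \<in> time_dom T \<Longrightarrow> x \<in> {1..a} \<Longrightarrow> fx t x = D 0 1 t x"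
  using has_real_derivative_unique_Icc[OF fx D_x[of t x 0 0, unfolded D_00 One_nat_def[symmetric]]]
    a_gt_1 by blast

lemma ft_eq_D: "t \<in> time_dom T \<Longrightarrow> 0 < t \<Longrightarrow> x \<in> {1..a} \<Longrightarrow> ft t x = D 1 0 t x"
  using has_real_derivative_unique_Icc[OF ft D_t[of t x 0 0, unfolded D_00 One_nat_def[symmetric]]]
    atLeastAtMost_subset_time_dom by fastforce

lemma ft_eq_weighted_Theta_x: "t \<in> time_dom T \<Longrightarrow> x \<in> {1..a} \<Longrightarrow> ft t x = U x * Theta_x t x"
  unfolding Theta_x_def by (rule flow)

lemma continuous_on_Theta: "continuous_on (time_dom T \<times> {1..a}) (\<lambda>(t, x). Theta t x)"
proof (rule continuous_on_eq)
  show "continuous_on (time_dom T \<times> {1..a})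
          (\<lambda>z. c * arctan (D 0 0 (fst z) (snd z) / snd z) + arctan (D 0 1 (fst z) (snd z)))"
    using D_cont[of 0 0] D_cont[of 0 1] unfolding case_prod_beta'
    by (intro continuous_intros) auto
qed (auto simp: Theta_def D_00 fx_eq_D)

lemma Theta_has_x_derivative:
  assumes "t \<in> time_dom T" "x \<in> {1..a}"
  shows "(Theta t has_real_derivative Theta_x t x) (at x within {1..a})"
proof -
  have "((\<lambda>y. c * arctan (f t y / y) + arctan (fx t y)) has_real_derivative
          c * ((x * fx t x - f t x) / (x\<^sup>2 + (f t x)\<^sup>2)) + inverse (1 + (fx t x)\<^sup>2) * fxx t x)
          (at x within {1..a})"
    using assms by (intro DERIV_add DERIV_cmult has_real_derivative_arctan_div
        DERIV_arctan[THEN DERIV_chain2] fx fxx) auto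
  moreover have "Theta t = (\<lambda>y. c * arctan (f t y / y) + arctan (fx t y))"
    by (simp add: fun_eq_iff Theta_def)
  moreover have "c * ((x * fx t x - f t x) / (x\<^sup>2 + (f t x)\<^sup>2)) + inverse (1 + (fx t x)\<^sup>2) * fxx t x
      = Theta_x t x"
    by (simp add: Theta_x_def divide_inverse)
  ultimately show ?thesis
    by (simp only:)
qed

lemma Theta_has_t_derivative:
  assumes t: "t \<in> time_dom T" and x: "x \<in> {1..a}"
  shows "((\<lambda>s. Theta s x) has_real_derivative Theta_t t x) (at t within time_dom T)"
proof -
  have "((\<lambda>s. fx s x) has_real_derivative D 1 1 t x) (at t within time_dom T)"
    using D_t[OF t x, of 0 1, unfolded One_nat_def[symmetric]] zero_less_one t
    by (rule has_field_derivative_transform_within) (metis fx_eq_D x One_nat_def)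
  then have "((\<lambda>s. c * arctan (f s x / x) + arctan (fx s x)) has_real_derivative
          c * (inverse (1 + (f t x / x)\<^sup>2) * (ft t x / x)) + inverse (1 + (fx t x)\<^sup>2) * D 1 1 t x)
          (at t within time_dom T)"
    by (intro DERIV_add DERIV_cmult DERIV_arctan[THEN DERIV_chain2] DERIV_cdivide ft[OF t x])
  moreover have "(\<lambda>s. Theta s x) = (\<lambda>s. c * arctan (f s x / x) + arctan (fx s x))"
    by (simp add: Theta_def)
  moreover have "c * (inverse (1 + (f t x / x)\<^sup>2) * (ft t x / x)) + inverse (1 + (fx t x)\<^sup>2) * D 1 1 t x
      = Theta_t t x"
    using x by (simp add: Theta_t_def divide_simps power2_eq_square add_nonneg_eq_0_iff)
  ultimately show ?thesis
    by (simp only:)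
qed

lemma Theta_t_nonneg_at_min:
  assumes t: "t \<in> time_dom T" "0 < t" and x: "x \<in> {1..a}"
    and min: "\<forall>y\<in>{1..a}. Theta t x \<le> Theta t y"
  shows "0 \<le> Theta_t t x"
proof -
  note Theta_x = Theta_has_x_derivative[OF t(1)]
  have ft_zero: "ft t x = 0"
    using weighted_slope_zero_at_min[OF Theta_x U_ends x min] ft_eq_weighted_Theta_x[OF t(1) x]
    by simp
  have ft_eq: "ft t y = U y * Theta_x t y" if "y \<in> {1<..<a}" for y
    using that by (simp add: ft_eq_weighted_Theta_x[OF t(1)])
  have ft_deriv: "(ft t has_real_derivative D 1 1 t x) (at x within {1..a})"
    using D_x[OF t(1) x, of 1 0, unfolded One_nat_def[symmetric]] zero_less_one x
    by (rule has_field_derivative_transform_within) (simp add: ft_eq_D t)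
  have "0 \<le> D 1 1 t x"
    by (rule weighted_slope_deriv_nonneg_at_min[where U = U,
          OF Theta_x U_pos ft_eq ft_deriv ft_zero a_gt_1 x min])
  then show ?thesis
    by (simp add: Theta_t_def ft_zero)
qed

lemma Theta_ge_initial_bound:
  assumes init: "\<forall>y\<in>{1..a}. m \<le> Theta 0 y" and t: "t \<in> time_dom T" and x: "x \<in> {1..a}"
  shows "m \<le> Theta t x"
proof (rule min_principle[OF compact_Icc continuous_on_Theta _ _ init t x])
  show "((\<lambda>s. Theta s y) has_real_derivative Theta_t s y) (at s within time_dom T)"
    if "s \<in> time_dom T" "0 < s" "y \<in> {1..a}" for s y
    using that(1,3) by (rule Theta_has_t_derivative)
  show "0 \<le> Theta_t s y"
    if "s \<in> time_dom T" "0 < s" "y \<in> {1..a}" "\<forall>z\<in>{1..a}. Theta s y \<le> Theta s z" for s y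
    using that by (rule Theta_t_nonneg_at_min)
qed

end

theorem lemma4p4:
  fixes n :: nat and a p q :: real and U :: "real \<Rightarrow> real"
    and f ft fx fxx :: "real \<Rightarrow> real \<Rightarrow> real" and T :: ereal
  assumes n3: "n \<ge> 3"
    and a1: "a > 1"
    and U_smooth: "smooth_on_interval U {1..a}"
    and U_pos: "\<forall>x\<in>{1<..<a}. U x > 0"
    and U_ends: "U 1 = 0" "U a = 0"
    and T_pos: "T > 0"
    and f_smooth: "smooth_on_strip f (time_dom T) {1..a}"
    and ft_deriv: "\<forall>t\<in>time_dom T. \<forall>x\<in>{1..a}.
           ((\<lambda>s. f s x) has_real_derivative ft t x) (at t within time_dom T)"
    and fx_deriv: "\<forall>t\<in>time_dom T. \<forall>x\<in>{1..a}.
           (f t has_real_derivative fx t x) (at x within {1..a})"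
    and fxx_deriv: "\<forall>t\<in>time_dom T. \<forall>x\<in>{1..a}.
           (fx t has_real_derivative fxx t x) (at x within {1..a})"
    and flow: "\<forall>t\<in>time_dom T. \<forall>x\<in>{1..a}.
           ft t x = U x * (fxx t x / (1 + (fx t x)\<^sup>2)
                     + (real n - 1) * (x * fx t x - f t x) / (x\<^sup>2 + (f t x)\<^sup>2))"
    and bc_left: "\<forall>t\<in>time_dom T. f t 1 = q"
    and bc_right: "\<forall>t\<in>time_dom T. f t a = p"
    and supercritical: "\<forall>x\<in>{1..a}.
           (real n - 1) * arctan (f 0 x / x) + arctan (fx 0 x) > (real n - 2) * (pi / 2)"
  shows "\<exists>C. \<forall>t\<in>time_dom T. \<forall>x\<in>{1..a}. fx t x > - C"
proof -
  obtain D where D: "D 0 0 = f" "\<forall>i j. continuous_on (time_dom T \<times> {1..a}) (\<lambda>(t, x). D i j t x)"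
    "\<forall>i j. \<forall>t\<in>time_dom T. \<forall>x\<in>{1..a}.
       ((\<lambda>s. D i j s x) has_real_derivative D (Suc i) j t x) (at t within time_dom T) \<and>
       ((\<lambda>y. D i j t y) has_real_derivative D i (Suc j) t x) (at x within {1..a})"
    using f_smooth unfolding smooth_on_strip_def by (elim exE conjE) (rule that)
  interpret calabi_symmetric_flow "real n - 1" a T U f ft fx fxx D
    by unfold_locales
      (rule a1 U_ends D(1) D(2)[rule_format] D(3)[rule_format, THEN conjunct1]
         D(3)[rule_format, THEN conjunct2] U_pos[rule_format] ft_deriv[rule_format]
         fx_deriv[rule_format] fxx_deriv[rule_format] flow[rule_format]; assumption)+
  have "continuous_on {1..a} (Theta 0)"
    using Theta_has_x_derivative[OF zero_in_time_dom[OF T_pos]] by (rule DERIV_continuous_on)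
  then obtain x0 where x0: "x0 \<in> {1..a}" and min: "\<forall>y\<in>{1..a}. Theta 0 x0 \<le> Theta 0 y"
    using continuous_attains_inf[OF compact_Icc _ \<open>continuous_on {1..a} (Theta 0)\<close>] a1 by auto
  have supercritical_min: "(real n - 1 - 1) * (pi / 2) < Theta 0 x0"
    using supercritical x0 by (simp add: Theta_def)
  have c_pos: "0 < real n - 1"
    using n3 by simp
  show ?thesis
  proof (intro exI ballI)
    fix t x assume "t \<in> time_dom T" "x \<in> {1..a}"
    with min have "Theta 0 x0 \<le> Theta t x"
      by (rule Theta_ge_initial_bound)
    then have "tan (Theta 0 x0 - (real n - 1) * (pi / 2)) < fx t x"
      unfolding Theta_def[of t x] by (rule tan_less_if_arctan_sum_ge[OF c_pos supercritical_min])
    then show "- (- tan (Theta 0 x0 - (real n - 1) * (pi / 2))) < fx t x"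
      by (simp only: minus_minus)
  qed
qed

end
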